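(* Let $\mathbb{K}$ be a positive commutative monoid and let $R_1,\dots,R_m$ be a collection of $\mathbb{K}$-relations. The following are equivalent: (1) the collection is globally consistent; (2) the collection is globally consistent up to every cover of $\mathbb{K}$; (3) the collection is globally consistent up to some cover of $\mathbb{K}$.
   Context: Positive: $p+q=0\Rightarrow p=q=0$. For a finite attribute set $X$ (attributes have domains), a $\mathbb{K}$-relation over $X$ is a map $R$ from $X$-tuples to $K$ with finite support $R'$; $t[Y]$ is restriction; marginals $R[Y](t)=\sum_{r\in R',r[Y]=t}R(r)$. With $R_i$ over $X_i$, the collection is $k$-wise consistent if for every $q\le k$ and $i_1,\dots,i_q\in[m]$ some $\mathbb{K}$-relation $W$ over $X_{i_1}\cup\dots\cup X_{i_q}$ has $W[X_{i_j}]=R_{i_j}$ for all $j$; globally consistent means $m$-wise. A cover of $\mathbb{K}$ is a pair $(\mathbb{K}^*,h)$ with $\mathbb{K}^*$ a positive commutative monoid and $h:\mathbb{K}^*\to\mathbb{K}$ a surjective monoid homomorphism. An $h$-lift of a $\mathbb{K}$-relation $R$ over $Y$ is a $\mathbb{K}^*$-relation $R^*$ over $Y$ with $h(R^*(t))=R(t)$ for all $Y$-tuples $t$. The collection is $k$-wise (in particular globally) consistent up to the cover if there are $h$-lifts $R_1^*,\dots,R_m^*$ of $R_1,\dots,R_m$ forming a $k$-wise (globally) consistent collection of $\mathbb{K}^*$-relations. *)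

theory Defs
  imports Main
begin

definition positive_monoid :: "'k::comm_monoid_add itself \<Rightarrow> bool" where
  "positive_monoid _ \<longleftrightarrow> (\<forall>p q::'k. p + q = 0 \<longrightarrow> p = 0 \<and> q = 0)"

type_synonym ('a, 'v) tup = "'a \<Rightarrow> 'v option"

definition is_tuple :: "('a \<Rightarrow> 'v set) \<Rightarrow> 'a set \<Rightarrow> ('a, 'v) tup \<Rightarrow> bool" where
  "is_tuple Dom X t \<longleftrightarrow> dom t = X \<and> (\<forall>A\<in>X. the (t A) \<in> Dom A)"

definition supp :: "(('a, 'v) tup \<Rightarrow> 'k::zero) \<Rightarrow> ('a, 'v) tup set" where
  "supp R = {t. R t \<noteq> 0}"

definition is_krel :: "('a \<Rightarrow> 'v set) \<Rightarrow> 'a set \<Rightarrow> (('a, 'v) tup \<Rightarrow> 'k::zero) \<Rightarrow> bool" where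
  "is_krel Dom X R \<longleftrightarrow> finite X \<and> finite (supp R) \<and> (\<forall>t. \<not> is_tuple Dom X t \<longrightarrow> R t = 0)"

definition marg :: "(('a, 'v) tup \<Rightarrow> 'k::comm_monoid_add) \<Rightarrow> 'a set \<Rightarrow> ('a, 'v) tup \<Rightarrow> 'k" where
  "marg R Y t = (\<Sum>r\<in>{r\<in>supp R. r |` Y = t}. R r)"

definition kwise_consistent ::
  "nat \<Rightarrow> ('a \<Rightarrow> 'v set) \<Rightarrow> nat \<Rightarrow> (nat \<Rightarrow> 'a set) \<Rightarrow> (nat \<Rightarrow> ('a, 'v) tup \<Rightarrow> 'k::comm_monoid_add) \<Rightarrow> bool" where
  "kwise_consistent k Dom m X R \<longleftrightarrow>
     (\<forall>q \<le> k. \<forall>\<iota> :: nat \<Rightarrow> nat. (\<forall>j<q. \<iota> j < m) \<longrightarrow>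
        (\<exists>W. is_krel Dom (\<Union>j<q. X (\<iota> j)) W \<and> (\<forall>j<q. marg W (X (\<iota> j)) = R (\<iota> j))))"

definition globally_consistent ::
  "('a \<Rightarrow> 'v set) \<Rightarrow> nat \<Rightarrow> (nat \<Rightarrow> 'a set) \<Rightarrow> (nat \<Rightarrow> ('a, 'v) tup \<Rightarrow> 'k::comm_monoid_add) \<Rightarrow> bool" where
  "globally_consistent Dom m X R \<longleftrightarrow> kwise_consistent m Dom m X R"

definition is_cover :: "('b::comm_monoid_add \<Rightarrow> 'k::comm_monoid_add) \<Rightarrow> bool" where
  "is_cover h \<longleftrightarrow> positive_monoid TYPE('b) \<and> surj h \<and> h 0 = 0 \<and> (\<forall>x y. h (x + y) = h x + h y)"

definition is_lift ::
  "('b::comm_monoid_add \<Rightarrow> 'k::comm_monoid_add) \<Rightarrow> ('a \<Rightarrow> 'v set) \<Rightarrow> 'a set \<Rightarrow> (('a, 'v) tup \<Rightarrow> 'k) \<Rightarrow> (('a, 'v) tup \<Rightarrow> 'b) \<Rightarrow> bool" where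
  "is_lift h Dom Y R Rs \<longleftrightarrow> is_krel Dom Y Rs \<and> (\<forall>t. is_tuple Dom Y t \<longrightarrow> h (Rs t) = R t)"

definition globally_consistent_upto ::
  "('b::comm_monoid_add \<Rightarrow> 'k::comm_monoid_add) \<Rightarrow> ('a \<Rightarrow> 'v set) \<Rightarrow> nat \<Rightarrow> (nat \<Rightarrow> 'a set) \<Rightarrow> (nat \<Rightarrow> ('a, 'v) tup \<Rightarrow> 'k) \<Rightarrow> bool" where
  "globally_consistent_upto h Dom m X R \<longleftrightarrow>
     (\<exists>Rs :: nat \<Rightarrow> ('a, 'v) tup \<Rightarrow> 'b. (\<forall>i<m. is_lift h Dom (X i) (R i) (Rs i)) \<and> globally_consistent Dom m X Rs)"

end

theory Submission
  imports Defs
begin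

text \<open>A collection is globally consistent exactly when one \<open>\<bbbK>\<close>-relation over the union of
  all schemas has the \<open>R\<^sub>i\<close> as marginals; every subcollection then takes the marginal of
  that witness on its own union. Marginalisation commutes with monoid homomorphisms. Hence a
  witness for the \<open>R\<^sub>i\<close> lifts pointwise along a section of \<open>h\<close> that fixes \<open>0\<close>, and its
  marginals are consistent \<open>h\<close>-lifts of the \<open>R\<^sub>i\<close>; conversely \<open>h\<close> maps a witness for
  consistent lifts to a witness for the \<open>R\<^sub>i\<close>. Positivity of \<open>\<bbbK>\<close> only serves to make the
  identity a cover.\<close>

lemma marg_eq_sum_superset:
  assumes "finite S" "supp R \<subseteq> S"
  shows "marg R Y t = (\<Sum>r\<in>{r\<in>S. r |` Y = t}. R r)"
  unfolding marg_def
  by (rule sum.mono_neutral_left) (use assms in \<open>auto simp: supp_def\<close>)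

lemma supp_marg: "supp (marg W U) \<subseteq> (\<lambda>r. r |` U) ` supp W"
proof
  fix t assume "t \<in> supp (marg W U)"
  moreover have "marg W U t = 0" if empty: "{r\<in>supp W. r |` U = t} = {}"
    unfolding marg_def empty by simp
  ultimately show "t \<in> (\<lambda>r. r |` U) ` supp W" unfolding supp_def by blast
qed

lemma is_tuple_restrict:
  assumes "is_tuple Dom X r" "U \<subseteq> X"
  shows "is_tuple Dom U (r |` U)"
  using assms unfolding is_tuple_def by auto

lemma is_krel_marg:
  assumes W: "is_krel Dom X W" and "U \<subseteq> X"
  shows "is_krel Dom U (marg W U)"
  unfolding is_krel_def
proof (intro conjI allI impI)
  show "finite U" using W \<open>U \<subseteq> X\<close> unfolding is_krel_def by (auto intro: finite_subset)
  have "finite (supp W)" using W unfolding is_krel_def by simp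
  then show "finite (supp (marg W U))" by (rule finite_subset[OF supp_marg finite_imageI])
  fix t assume "\<not> is_tuple Dom U t"
  then have empty: "{r\<in>supp W. r |` U = t} = {}"
    using W \<open>U \<subseteq> X\<close> is_tuple_restrict unfolding is_krel_def supp_def by blast
  show "marg W U t = 0" unfolding marg_def empty by simp
qed

lemma marg_marg:
  assumes fin: "finite (supp W)" and "Y \<subseteq> U"
  shows "marg (marg W U) Y = marg W Y"
proof
  fix t
  let ?S = "{r\<in>supp W. r |` Y = t}"
  let ?T = "{s \<in> (\<lambda>r. r |` U) ` supp W. s |` Y = t}"
  have restrict_Y: "r |` U |` Y = r |` Y" for r :: "('a, 'b) tup"
    using \<open>Y \<subseteq> U\<close> by (simp add: Int_absorb1)
  have fibre: "{r\<in>supp W. r |` U = s} = {r\<in>?S. r |` U = s}" if "s \<in> ?T" for s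
    using that by (auto simp del: restrict_restrict) (metis restrict_Y)
  have "marg (marg W U) Y t = (\<Sum>s\<in>?T. marg W U s)"
    using fin by (intro marg_eq_sum_superset supp_marg) simp
  also have "\<dots> = (\<Sum>s\<in>?T. \<Sum>r\<in>{r\<in>?S. r |` U = s}. W r)"
    by (rule sum.cong[OF refl]) (simp add: marg_def fibre)
  also have "\<dots> = (\<Sum>r\<in>?S. W r)"
    using fin restrict_Y by (intro sum.group) auto
  finally show "marg (marg W U) Y t = marg W Y t" unfolding marg_def .
qed

lemma supp_comp_subset: "h 0 = 0 \<Longrightarrow> supp (h \<circ> W) \<subseteq> supp W"
  unfolding supp_def by auto

lemma is_krel_comp:
  assumes "h 0 = 0" "is_krel Dom X W"
  shows "is_krel Dom X (h \<circ> W)"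
  using assms supp_comp_subset[of h W] unfolding is_krel_def by (auto intro: finite_subset)

lemma marg_comp:
  assumes "h 0 = 0" "\<And>x y. h (x + y) = h x + h y" "finite (supp W)"
  shows "marg (h \<circ> W) Y = h \<circ> marg W Y"
proof
  fix t
  have "marg (h \<circ> W) Y t = (\<Sum>r\<in>{r\<in>supp W. r |` Y = t}. (h \<circ> W) r)"
    using assms(3) supp_comp_subset[of h W, OF assms(1)] by (rule marg_eq_sum_superset)
  also have "\<dots> = h (marg W Y t)"
    unfolding marg_def using assms(1,2) by (rule sum_comp_morphism)
  finally show "marg (h \<circ> W) Y t = (h \<circ> marg W Y) t" by simp
qed

lemma globally_consistent_iff_witness:
  "globally_consistent Dom m X R \<longleftrightarrow>
     (\<exists>W. is_krel Dom (\<Union>j<m. X j) W \<and> (\<forall>j<m. marg W (X j) = R j))"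
proof
  assume "globally_consistent Dom m X R"
  then have "\<exists>W. is_krel Dom (\<Union>j<m. X (id j)) W \<and> (\<forall>j<m. marg W (X (id j)) = R (id j))"
    unfolding globally_consistent_def kwise_consistent_def by simp
  then show "\<exists>W. is_krel Dom (\<Union>j<m. X j) W \<and> (\<forall>j<m. marg W (X j) = R j)"
    by simp
next
  assume "\<exists>W. is_krel Dom (\<Union>j<m. X j) W \<and> (\<forall>j<m. marg W (X j) = R j)"
  then obtain W where W: "is_krel Dom (\<Union>j<m. X j) W" and R: "\<And>j. j < m \<Longrightarrow> marg W (X j) = R j"
    by blast
  have fin: "finite (supp W)" using W unfolding is_krel_def by simp
  show "globally_consistent Dom m X R"
    unfolding globally_consistent_def kwise_consistent_def
  proof (intro allI impI)
    fix q and \<iota> :: "nat \<Rightarrow> nat" assume "q \<le> m" and \<iota>: "\<forall>j<q. \<iota> j < m"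
    let ?U = "\<Union>j<q. X (\<iota> j)"
    have "is_krel Dom ?U (marg W ?U)" using W \<iota> by (intro is_krel_marg) auto
    moreover have "marg (marg W ?U) (X (\<iota> j)) = R (\<iota> j)" if "j < q" for j
    proof -
      have "X (\<iota> j) \<subseteq> ?U" using that by auto
      then have "marg (marg W ?U) (X (\<iota> j)) = marg W (X (\<iota> j))" by (rule marg_marg[OF fin])
      then show ?thesis using that \<iota> R by simp
    qed
    ultimately show "\<exists>V. is_krel Dom ?U V \<and> (\<forall>j<q. marg V (X (\<iota> j)) = R (\<iota> j))"
      by blast
  qed
qed

lemma exists_krel_lift:
  assumes "surj h" "h 0 = 0" "is_krel Dom X W"
  shows "\<exists>V. is_krel Dom X V \<and> h \<circ> V = W"
proof (intro exI conjI)
  let ?V = "\<lambda>t. if W t = 0 then 0 else inv h (W t)"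
  have "supp ?V \<subseteq> supp W" unfolding supp_def by auto
  then show "is_krel Dom X ?V" using assms(3) unfolding is_krel_def by (auto intro: finite_subset)
  show "h \<circ> ?V = W" using assms(1,2) by (auto simp: surj_f_inv_f)
qed

lemma is_lift_comp_eq:
  assumes "h 0 = 0" "is_krel Dom Y R" "is_lift h Dom Y R Rs"
  shows "h \<circ> Rs = R"
proof
  fix t
  show "(h \<circ> Rs) t = R t"
    using assms unfolding is_lift_def is_krel_def by (cases "is_tuple Dom Y t") auto
qed

lemma is_cover_id:
  assumes "positive_monoid TYPE('k::comm_monoid_add)"
  shows "is_cover (id :: 'k \<Rightarrow> 'k)"
  using assms unfolding is_cover_def by simp

lemma globally_consistent_upto_if_globally_consistent:
  assumes h: "is_cover h" and "globally_consistent Dom m X R"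
  shows "globally_consistent_upto h Dom m X R"
proof -
  have h0: "h 0 = 0" and hadd: "\<And>x y. h (x + y) = h x + h y" and "surj h"
    using h unfolding is_cover_def by auto
  obtain W where W: "is_krel Dom (\<Union>j<m. X j) W" and R: "\<And>j. j < m \<Longrightarrow> marg W (X j) = R j"
    using assms(2) unfolding globally_consistent_iff_witness by blast
  obtain V where V: "is_krel Dom (\<Union>j<m. X j) V" and hV: "h \<circ> V = W"
    using exists_krel_lift[OF \<open>surj h\<close> h0 W] by blast
  have fin: "finite (supp V)" using V unfolding is_krel_def by simp
  have "is_lift h Dom (X i) (R i) (marg V (X i))" if "i < m" for i
  proof -
    have "h \<circ> marg V (X i) = R i" using marg_comp[of h, OF h0 hadd fin] hV R[OF that] by simp
    then show ?thesis
      unfolding is_lift_def using is_krel_marg[OF V] that by (auto simp: fun_eq_iff)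
  qed
  moreover have "globally_consistent Dom m X (\<lambda>i. marg V (X i))"
    unfolding globally_consistent_iff_witness using V by blast
  ultimately show ?thesis
    unfolding globally_consistent_upto_def by (intro exI[of _ "\<lambda>i. marg V (X i)"]) simp
qed

lemma globally_consistent_if_upto:
  assumes h: "is_cover h" and R: "\<And>i. i < m \<Longrightarrow> is_krel Dom (X i) (R i)"
    and "globally_consistent_upto h Dom m X R"
  shows "globally_consistent Dom m X R"
proof -
  have h0: "h 0 = 0" and hadd: "\<And>x y. h (x + y) = h x + h y"
    using h unfolding is_cover_def by auto
  obtain Rs where lift: "\<And>i. i < m \<Longrightarrow> is_lift h Dom (X i) (R i) (Rs i)"
    and "globally_consistent Dom m X Rs"
    using assms(3) unfolding globally_consistent_upto_def by blast
  then obtain V where V: "is_krel Dom (\<Union>j<m. X j) V" and Rs: "\<And>j. j < m \<Longrightarrow> marg V (X j) = Rs j"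
    unfolding globally_consistent_iff_witness by blast
  have fin: "finite (supp V)" using V unfolding is_krel_def by simp
  have "h \<circ> Rs i = R i" if "i < m" for i
    using is_lift_comp_eq[of h, OF h0 R[OF that] lift[OF that]] .
  then have "\<forall>j<m. marg (h \<circ> V) (X j) = R j"
    using marg_comp[of h, OF h0 hadd fin] Rs by simp
  then show ?thesis
    unfolding globally_consistent_iff_witness using is_krel_comp[of h, OF h0 V] by blast
qed

theorem proposition42:
  fixes Dom :: "'a \<Rightarrow> 'v set" and m :: nat and X :: "nat \<Rightarrow> 'a set"
    and R :: "nat \<Rightarrow> ('a, 'v) tup \<Rightarrow> 'k::comm_monoid_add"
  assumes "positive_monoid TYPE('k)"
    and "\<And>i. i < m \<Longrightarrow> is_krel Dom (X i) (R i)"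
  shows "(globally_consistent Dom m X R \<longrightarrow>
            (\<forall>h :: 'b::comm_monoid_add \<Rightarrow> 'k. is_cover h \<longrightarrow> globally_consistent_upto h Dom m X R))
       \<and> ((\<forall>h :: 'k \<Rightarrow> 'k. is_cover h \<longrightarrow> globally_consistent_upto h Dom m X R) \<longrightarrow>
            (\<exists>h :: 'k \<Rightarrow> 'k. is_cover h \<and> globally_consistent_upto h Dom m X R))
       \<and> ((\<exists>h :: 'c::comm_monoid_add \<Rightarrow> 'k. is_cover h \<and> globally_consistent_upto h Dom m X R) \<longrightarrow>
            globally_consistent Dom m X R)"
proof (intro conjI impI allI)
  fix h :: "'b \<Rightarrow> 'k"
  assume "globally_consistent Dom m X R" and "is_cover h"
  then show "globally_consistent_upto h Dom m X R"
    by (intro globally_consistent_upto_if_globally_consistent)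
next
  assume "\<forall>h :: 'k \<Rightarrow> 'k. is_cover h \<longrightarrow> globally_consistent_upto h Dom m X R"
  then show "\<exists>h :: 'k \<Rightarrow> 'k. is_cover h \<and> globally_consistent_upto h Dom m X R"
    using is_cover_id[OF assms(1)] by blast
next
  assume "\<exists>h :: 'c \<Rightarrow> 'k. is_cover h \<and> globally_consistent_upto h Dom m X R"
  then obtain h :: "'c \<Rightarrow> 'k" where h: "is_cover h" and upto: "globally_consistent_upto h Dom m X R"
    by blast
  from h assms(2) upto show "globally_consistent Dom m X R"
    by (rule globally_consistent_if_upto)
qed

end
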